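(* The strong substitutes property is not sufficient to guarantee that a Walrasian equilibrium on the original items is a price-match equilibrium: there exists a combinatorial auction in which every bidder's valuation satisfies the strong substitutes property and a Walrasian equilibrium on the original items exists, but no Walrasian equilibrium on the original items is a price-match equilibrium.
   Context: Combinatorial auction: item types $j$ with supply $c_j\in\mathbb Z_{\ge1}$; bidders $\mathcal I$ with valuations $v_i$ on bundles $a\in\mathbb Z^J_{\ge0}$, $a\le c$ (normalized, monotone), expressed as bids (bundle, amount) with at most one accepted bid per bidder; bids are truthful. A feasible allocation assigns disjoint-supply-respecting bundles; $x^*$ is an efficient allocation with bundles $a^{i*}$. Linear prices $p\in\mathbb R^J_{\ge0}$; a Walrasian equilibrium on the original items (no artificial items) is $(x^*,p)$ such that each bidder's bundle $a^{i*}$ maximizes $v_i(a)-p\,a$ over bundles, and $p_j=0$ for any item in excess supply under $x^*$. It is a price-match equilibrium if for every bidder $i$ there is a feasible allocation of bundles to the other bidders (one accepted bid each) such that each of them has value at least the price of her bundle, and the total price of the allocated bundles equals $\sum_{i}p\,a^{i*}$. A valuation satisfies gross substitutes (for unique items) if for price vectors $p\le q$ and any $S$ in the demand set at $p$ there is $T$ in the demand set at $q$ containing every $j\in S$ with $p_j=q_j$; it satisfies strong substitutes if it satisfies gross substitutes when every unit of every item type is treated as a distinct item. *)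

theory Defs
  imports Complex_Main
begin

text \<open>Item types are natural numbers in a finite set J, with supply c j.
  Bidders are natural numbers in a finite set I.  A bundle is a function
  a :: nat \<Rightarrow> nat giving the number of units of each item type.\<close>

definition bundles :: "nat set \<Rightarrow> (nat \<Rightarrow> nat) \<Rightarrow> (nat \<Rightarrow> nat) set" where
  "bundles J c = {a. (\<forall>j. j \<notin> J \<longrightarrow> a j = 0) \<and> (\<forall>j\<in>J. a j \<le> c j)}"

definition valuation :: "nat set \<Rightarrow> (nat \<Rightarrow> nat) \<Rightarrow> ((nat \<Rightarrow> nat) \<Rightarrow> real) \<Rightarrow> bool" where
  "valuation J c v \<longleftrightarrow> v (\<lambda>_. 0) = 0 \<and>
     (\<forall>a\<in>bundles J c. \<forall>b\<in>bundles J c. (\<forall>j. a j \<le> b j) \<longrightarrow> v a \<le> v b)"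

definition feasible :: "nat set \<Rightarrow> (nat \<Rightarrow> nat) \<Rightarrow> nat set \<Rightarrow> (nat \<Rightarrow> nat \<Rightarrow> nat) \<Rightarrow> bool" where
  "feasible J c I x \<longleftrightarrow> (\<forall>i\<in>I. x i \<in> bundles J c) \<and> (\<forall>j\<in>J. (\<Sum>i\<in>I. x i j) \<le> c j)"

definition bprice :: "nat set \<Rightarrow> (nat \<Rightarrow> real) \<Rightarrow> (nat \<Rightarrow> nat) \<Rightarrow> real" where
  "bprice J p a = (\<Sum>j\<in>J. p j * real (a j))"

definition efficient :: "nat set \<Rightarrow> (nat \<Rightarrow> nat) \<Rightarrow> nat set \<Rightarrow> (nat \<Rightarrow> (nat \<Rightarrow> nat) \<Rightarrow> real)
    \<Rightarrow> (nat \<Rightarrow> nat \<Rightarrow> nat) \<Rightarrow> bool" where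
  "efficient J c I v x \<longleftrightarrow> feasible J c I x \<and>
     (\<forall>y. feasible J c I y \<longrightarrow> (\<Sum>i\<in>I. v i (y i)) \<le> (\<Sum>i\<in>I. v i (x i)))"

definition walrasian :: "nat set \<Rightarrow> (nat \<Rightarrow> nat) \<Rightarrow> nat set \<Rightarrow> (nat \<Rightarrow> (nat \<Rightarrow> nat) \<Rightarrow> real)
    \<Rightarrow> (nat \<Rightarrow> nat \<Rightarrow> nat) \<Rightarrow> (nat \<Rightarrow> real) \<Rightarrow> bool" where
  "walrasian J c I v x p \<longleftrightarrow> efficient J c I v x \<and> (\<forall>j\<in>J. 0 \<le> p j) \<and>
     (\<forall>i\<in>I. \<forall>a\<in>bundles J c. v i a - bprice J p a \<le> v i (x i) - bprice J p (x i)) \<and>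
     (\<forall>j\<in>J. (\<Sum>i\<in>I. x i j) < c j \<longrightarrow> p j = 0)"

definition price_match :: "nat set \<Rightarrow> (nat \<Rightarrow> nat) \<Rightarrow> nat set \<Rightarrow> (nat \<Rightarrow> (nat \<Rightarrow> nat) \<Rightarrow> real)
    \<Rightarrow> (nat \<Rightarrow> nat \<Rightarrow> nat) \<Rightarrow> (nat \<Rightarrow> real) \<Rightarrow> bool" where
  "price_match J c I v x p \<longleftrightarrow> walrasian J c I v x p \<and>
     (\<forall>i\<in>I. \<exists>y. feasible J c (I - {i}) y \<and>
        (\<forall>k\<in>I - {i}. bprice J p (y k) \<le> v k (y k)) \<and>
        (\<Sum>k\<in>I - {i}. bprice J p (y k)) = (\<Sum>k\<in>I. bprice J p (x k)))"

text \<open>Gross substitutes for unique items: items form a finite set U,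
  V is a valuation on subsets of U, prices are arbitrary real vectors on U.\<close>
definition demand_set :: "'u set \<Rightarrow> ('u set \<Rightarrow> real) \<Rightarrow> ('u \<Rightarrow> real) \<Rightarrow> 'u set set" where
  "demand_set U V q = {S. S \<subseteq> U \<and>
     (\<forall>T. T \<subseteq> U \<longrightarrow> V T - (\<Sum>u\<in>T. q u) \<le> V S - (\<Sum>u\<in>S. q u))}"

definition gross_substitutes :: "'u set \<Rightarrow> ('u set \<Rightarrow> real) \<Rightarrow> bool" where
  "gross_substitutes U V \<longleftrightarrow>
     (\<forall>p q. (\<forall>u\<in>U. p u \<le> q u) \<longrightarrow>
        (\<forall>S\<in>demand_set U V p. \<exists>T\<in>demand_set U V q. {u\<in>S. p u = q u} \<subseteq> T))"

text \<open>Strong substitutes: gross substitutes when every unit (j,k), k < c j,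
  of every item type j is treated as a distinct item.\<close>
definition units :: "nat set \<Rightarrow> (nat \<Rightarrow> nat) \<Rightarrow> (nat \<times> nat) set" where
  "units J c = {(j, k). j \<in> J \<and> k < c j}"

definition unit_valuation :: "((nat \<Rightarrow> nat) \<Rightarrow> real) \<Rightarrow> (nat \<times> nat) set \<Rightarrow> real" where
  "unit_valuation v S = v (\<lambda>j. card {k. (j, k) \<in> S})"

definition strong_substitutes :: "nat set \<Rightarrow> (nat \<Rightarrow> nat) \<Rightarrow> ((nat \<Rightarrow> nat) \<Rightarrow> real) \<Rightarrow> bool" where
  "strong_substitutes J c v \<longleftrightarrow> gross_substitutes (units J c) (unit_valuation v)"

end

theory Submission
  imports Defs
begin

text \<open>One item type with two units and two bidders: bidder 0 values every unit at 2,
  bidder 1 values any nonempty bundle at 1. Both valuations are concave in the number of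
  units; for two units this is submodularity on two unit-items, which already implies gross
  substitutes. Efficiency gives both units to bidder 0, and bidder 1's not demanding a unit
  forces the price to be at least 1, so the revenue is at least 2. Once bidder 0 is removed,
  bidder 1 alone would have to pay this revenue, but she values every bundle at most 1.\<close>

lemma demand_set_nonempty:
  assumes "finite U"
  shows "demand_set U V q \<noteq> {}"
proof -
  let ?u = "\<lambda>T. V T - sum q T"
  have "finite (?u ` Pow U)" "?u ` Pow U \<noteq> {}" using assms by auto
  then have "Max (?u ` Pow U) \<in> ?u ` Pow U" by (rule Max_in)
  then obtain S where "S \<in> Pow U" "?u S = Max (?u ` Pow U)" by auto
  then have "S \<in> demand_set U V q"
    using \<open>finite (?u ` Pow U)\<close> unfolding demand_set_def by auto
  then show ?thesis by blast
qed

lemma demand_set_subset: "S \<in> demand_set U V q \<Longrightarrow> S \<subseteq> U"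
  unfolding demand_set_def by blast

lemma demand_set_optimal:
  "S \<in> demand_set U V q \<Longrightarrow> T \<subseteq> U \<Longrightarrow> V T - sum q T \<le> V S - sum q S"
  unfolding demand_set_def by blast

lemma demand_set_price_increase:
  assumes "\<forall>u\<in>U. p u \<le> q u" and "S \<in> demand_set U V p" and "\<forall>u\<in>S. p u = q u"
  shows "S \<in> demand_set U V q"
proof -
  have "V T - sum q T \<le> V S - sum q S" if "T \<subseteq> U" for T
  proof -
    have "sum p T \<le> sum q T" using assms(1) that by (auto intro: sum_mono)
    moreover have "sum p S = sum q S" using assms(3) by simp
    moreover have "V T - sum p T \<le> V S - sum p S"
      using assms(2) that unfolding demand_set_def by auto
    ultimately show ?thesis by linarith
  qed
  then show ?thesis using demand_set_subset[OF assms(2)] unfolding demand_set_def by blast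
qed

lemma demand_set_insert:
  assumes "T \<in> demand_set U V q" and "a \<in> U" and "a \<notin> T" and "finite T"
    and "q a \<le> V (insert a T) - V T"
  shows "insert a T \<in> demand_set U V q"
  using assms unfolding demand_set_def by auto

lemma submodular_two_items_demand_keeps_item:
  assumes "a \<noteq> b" and submod: "V {} + V {a, b} \<le> V {a} + V {b}"
    and "{a, b} \<in> demand_set {a, b} V p" and "p a = q a"
  shows "\<exists>T\<in>demand_set {a, b} V q. a \<in> T"
proof -
  obtain T where T: "T \<in> demand_set {a, b} V q"
    using demand_set_nonempty[of "{a, b}" V q] by blast
  show ?thesis
  proof (cases "a \<in> T")
    case True
    then show ?thesis using T by blast
  next
    case False
    have "V {b} - sum p {b} \<le> V {a, b} - sum p {a, b}"
      using demand_set_optimal[OF assms(3), of "{b}"] by simp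
    then have marginal: "p a \<le> V {a, b} - V {b}" using \<open>a \<noteq> b\<close> by simp
    have "T \<subseteq> {a, b}" using demand_set_subset[OF T] .
    then have T_cases: "T = {} \<or> T = {b}" using False by auto
    \<comment> \<open>by submodularity, adding \<open>a\<close> to a subset of \<open>{b}\<close> gains at least \<open>V {a, b} - V {b}\<close>\<close>
    then have "q a \<le> V (insert a T) - V T"
      using marginal submod \<open>p a = q a\<close> by auto
    then have "insert a T \<in> demand_set {a, b} V q"
      using demand_set_insert[OF T _ False] T_cases by auto
    then show ?thesis by blast
  qed
qed

lemma gross_substitutes_two_items:
  assumes "a \<noteq> b" and submod: "V {} + V {a, b} \<le> V {a} + V {b}"
  shows "gross_substitutes {a, b} V"
  unfolding gross_substitutes_def
proof (intro allI impI ballI)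
  fix p q :: "_ \<Rightarrow> real" and S
  assume le: "\<forall>u\<in>{a, b}. p u \<le> q u" and S: "S \<in> demand_set {a, b} V p"
  have "S \<subseteq> {a, b}" using demand_set_subset[OF S] .
  show "\<exists>T\<in>demand_set {a, b} V q. {u\<in>S. p u = q u} \<subseteq> T"
  proof (cases "\<forall>u\<in>S. p u = q u")
    case True
    then show ?thesis using demand_set_price_increase[OF le S] by blast
  next
    case False
    then obtain b' where b': "b' \<in> S" "p b' \<noteq> q b'" by blast
    show ?thesis
    proof (cases "\<exists>a'\<in>S. p a' = q a'")
      case False
      obtain T where "T \<in> demand_set {a, b} V q"
        using demand_set_nonempty[of "{a, b}" V q] by blast
      then show ?thesis using False by blast
    next
      case True
      then obtain a' where a': "a' \<in> S" "p a' = q a'" by blast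
      have "a' \<noteq> b'" using a' b' by blast
      then have swap: "a' = a \<and> b' = b \<or> a' = b \<and> b' = a"
        using a'(1) b'(1) \<open>S \<subseteq> {a, b}\<close> by blast
      then have ab': "{a', b'} = {a, b}" by blast
      have S_eq: "S = {a', b'}" using a'(1) b'(1) \<open>S \<subseteq> {a, b}\<close> ab' by blast
      have "V {} + V {a', b'} \<le> V {a'} + V {b'}"
        using submod swap by (auto simp: insert_commute)
      moreover have "{a', b'} \<in> demand_set {a', b'} V p" using S S_eq ab' by simp
      ultimately obtain T where "T \<in> demand_set {a, b} V q" "a' \<in> T"
        using submodular_two_items_demand_keeps_item \<open>a' \<noteq> b'\<close> a'(2) ab' by metis
      moreover have "{u\<in>S. p u = q u} \<subseteq> {a'}" using S_eq b'(2) by blast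
      ultimately show ?thesis by blast
    qed
  qed
qed

lemma card_units_of_type:
  assumes "S \<subseteq> {j} \<times> UNIV"
  shows "card {k. (j, k) \<in> S} = card S"
proof -
  have "S = Pair j ` {k. (j, k) \<in> S}" using assms by auto
  then show ?thesis by (metis card_image inj_on_def prod.inject)
qed

lemma unit_valuation_of_type:
  assumes "\<And>a. v a = f (a j)" and "S \<subseteq> {j} \<times> UNIV"
  shows "unit_valuation v S = f (card S)"
  using assms(1) card_units_of_type[OF assms(2)] unfolding unit_valuation_def by simp

lemma strong_substitutes_concave_two_units:
  assumes "c j = 2" and v: "\<And>a. v a = f (a j)" and concave: "f 0 + f 2 \<le> 2 * f 1"
  shows "strong_substitutes {j} c v"
proof -
  have units: "units {j} c = {(j, 0), (j, 1)}"
    using \<open>c j = 2\<close> unfolding units_def by auto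
  have "unit_valuation v {} + unit_valuation v {(j, 0), (j, 1)}
      \<le> unit_valuation v {(j, 0)} + unit_valuation v {(j, 1)}"
    using concave by (simp add: unit_valuation_of_type[of v f j, OF v] numeral_2_eq_2)
  then show ?thesis
    unfolding strong_substitutes_def units by (rule gross_substitutes_two_items[rotated]) simp
qed

lemma bprice_single_type: "bprice {j} p a = p j * real (a j)"
  unfolding bprice_def by simp

lemma bundles_single_type: "a \<in> bundles {j} c \<longleftrightarrow> (\<forall>i. i \<noteq> j \<longrightarrow> a i = 0) \<and> a j \<le> c j"
  unfolding bundles_def by auto

lemma feasible_two_bidders:
  "feasible {j} c {0, 1} x \<longleftrightarrow>
     x 0 \<in> bundles {j} c \<and> x 1 \<in> bundles {j} c \<and> x 0 j + x 1 j \<le> c j"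
  unfolding feasible_def by auto

definition example_valuation :: "nat \<Rightarrow> (nat \<Rightarrow> nat) \<Rightarrow> real" where
  "example_valuation i a = (if i = 0 then 2 * real (a 0) else if a 0 = 0 then 0 else 1)"

definition example_allocation :: "nat \<Rightarrow> nat \<Rightarrow> nat" where
  "example_allocation i j = (if i = 0 \<and> j = 0 then 2 else 0)"

abbreviation example_walrasian :: "(nat \<Rightarrow> nat \<Rightarrow> nat) \<Rightarrow> (nat \<Rightarrow> real) \<Rightarrow> bool" where
  "example_walrasian \<equiv> walrasian {0} (\<lambda>_. 2) {0, 1} example_valuation"

lemma valuation_example_valuation: "valuation {0} c (example_valuation i)"
proof -
  have "example_valuation i a \<le> example_valuation i b" if "a 0 \<le> b 0" for a b
    using that by (simp add: example_valuation_def)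
  then show ?thesis unfolding valuation_def by (simp add: example_valuation_def)
qed

lemma strong_substitutes_example_valuation:
  "strong_substitutes {0} (\<lambda>_. 2) (example_valuation i)"
proof (cases "i = 0")
  case True
  show ?thesis
    by (rule strong_substitutes_concave_two_units[where f = "\<lambda>n. 2 * real n"])
      (simp_all add: example_valuation_def True)
next
  case False
  show ?thesis
    by (rule strong_substitutes_concave_two_units[where f = "\<lambda>n. if n = 0 then 0 else 1"])
      (simp_all add: example_valuation_def False)
qed

lemma example_welfare_le:
  assumes "feasible {0} (\<lambda>_. 2) {0, 1} y"
  shows "(\<Sum>i\<in>{0, 1}. example_valuation i (y i)) \<le> 4"
  using assms unfolding feasible_two_bidders example_valuation_def by auto

lemma walrasian_example_allocation: "example_walrasian example_allocation (\<lambda>_. 1)"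
  unfolding walrasian_def efficient_def
proof (intro conjI ballI allI impI)
  show "feasible {0} (\<lambda>_. 2) {0, 1} example_allocation"
    unfolding feasible_two_bidders bundles_single_type example_allocation_def by simp
next
  fix y assume "feasible {0} (\<lambda>_. 2) {0, 1} y"
  then show "(\<Sum>i\<in>{0, 1}. example_valuation i (y i))
      \<le> (\<Sum>i\<in>{0, 1}. example_valuation i (example_allocation i))"
    using example_welfare_le by (simp add: example_valuation_def example_allocation_def)
next
  fix i a assume "i \<in> {0, 1 :: nat}" "a \<in> bundles {0} (\<lambda>_. 2)"
  then show "example_valuation i a - bprice {0} (\<lambda>_. 1) a
      \<le> example_valuation i (example_allocation i) - bprice {0} (\<lambda>_. 1) (example_allocation i)"
    unfolding bprice_single_type bundles_single_type example_valuation_def example_allocation_def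
    by auto
qed (auto simp: example_allocation_def)

lemma example_walrasianD:
  assumes "example_walrasian x p"
  shows "x 0 0 = 2" and "x 1 0 = 0" and "1 \<le> p 0"
proof -
  have "feasible {0} (\<lambda>_. 2) {0, 1} x"
    and "(\<Sum>i\<in>{0, 1}. example_valuation i (example_allocation i))
      \<le> (\<Sum>i\<in>{0, 1}. example_valuation i (x i))"
    using assms walrasian_example_allocation unfolding walrasian_def efficient_def by blast+
  then show x00: "x 0 0 = 2" and x10: "x 1 0 = 0"
    unfolding feasible_two_bidders
    by (auto simp: example_valuation_def example_allocation_def split: if_splits)
  let ?one_unit = "\<lambda>j. if j = 0 then 1 else 0 :: nat"
  have "?one_unit \<in> bundles {0} (\<lambda>_. 2)" unfolding bundles_single_type by simp
  then have "example_valuation 1 ?one_unit - bprice {0} p ?one_unit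
      \<le> example_valuation 1 (x 1) - bprice {0} p (x 1)"
    using assms unfolding walrasian_def by blast
  then show "1 \<le> p 0" using x10 by (simp add: bprice_single_type example_valuation_def)
qed

lemma example_not_price_match:
  assumes "example_walrasian x p"
  shows "\<not> price_match {0} (\<lambda>_. 2) {0, 1} example_valuation x p"
proof
  assume "price_match {0} (\<lambda>_. 2) {0, 1} example_valuation x p"
  then obtain y where "feasible {0} (\<lambda>_. 2) {1} y"
    and paid: "bprice {0} p (y 1) \<le> example_valuation 1 (y 1)"
    and revenue: "bprice {0} p (y 1) = bprice {0} p (x 0) + bprice {0} p (x 1)"
    unfolding price_match_def by (force simp: insert_Diff_if)
  note x = example_walrasianD[OF assms]
  have "y 1 0 \<le> 2" using \<open>feasible {0} (\<lambda>_. 2) {1} y\<close> by (simp add: feasible_def)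
  moreover have "p 0 * real (y 1 0) = 2 * p 0"
    using revenue x by (simp add: bprice_single_type)
  ultimately have "y 1 0 = 2" using x(3) by simp
  then show False using paid x(3) by (simp add: bprice_single_type example_valuation_def)
qed

theorem corollary4:
  shows "\<exists>(J::nat set) (c::nat \<Rightarrow> nat) (I::nat set) (v::nat \<Rightarrow> (nat \<Rightarrow> nat) \<Rightarrow> real).
     finite J \<and> (\<forall>j\<in>J. 1 \<le> c j) \<and> finite I \<and>
     (\<forall>i\<in>I. valuation J c (v i) \<and> strong_substitutes J c (v i)) \<and>
     (\<exists>x p. walrasian J c I v x p) \<and>
     (\<forall>x p. walrasian J c I v x p \<longrightarrow> \<not> price_match J c I v x p)"
  using valuation_example_valuation strong_substitutes_example_valuation
    walrasian_example_allocation example_not_price_match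
  by (intro exI[of _ "{0}"] exI[of _ "\<lambda>_. 2"] exI[of _ "{0, 1}"] exI[of _ example_valuation]) auto

end
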